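(* Let $n\geq4$, $D_n=\{x\in\mathbb{Z}^n:\sum_i x_i\equiv0\bmod2\}$, $\mathcal{P}$ its Voronoi region with vertex set $V_{\mathcal{P}}$, and $D_n^\#$ the dual lattice. Let $\tilde G$ be the Cayley graph on $\frac12D_n^\#$ with generating set $\frac12V_{\mathcal{P}}$. Then every clique $C$ of $\tilde G$ satisfies $\delta^0(C)=\frac{|C|}{|N[C]|}\leq\frac{1}{(3/4)2^n+n-1}$.
   Context: The Voronoi region of a lattice $\Lambda\subset\mathbb{R}^n$ is $\{z:\langle z-x,z-x\rangle\geq\langle z,z\rangle\ \forall x\in\Lambda\}$; $D_n^\#=\{y:\langle x,y\rangle\in\mathbb{Z}\ \forall x\in D_n\}$. It is known that $V_{\mathcal{P}}$ consists of the $2n$ vectors $\pm e_i$ and the $2^n$ vectors $(\pm\frac12,\dots,\pm\frac12)$. In the Cayley graph, $x,y$ are adjacent iff $x-y\in\frac12V_{\mathcal{P}}$. A clique is a set of vertices any two distinct elements of which are adjacent; $N[C]=C+(\{0\}\cup\frac12V_{\mathcal{P}})$ is its closed neighborhood. *)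

theory Defs
  imports "HOL-Analysis.Analysis"
begin

definition Dn :: "(real^'n) set" where
  "Dn = {x. (\<forall>i. x $ i \<in> \<int>) \<and> (\<exists>k::int. (\<Sum>i\<in>UNIV. x $ i) = 2 * of_int k)}"

definition dual_lattice :: "(real^'n) set \<Rightarrow> (real^'n) set" where
  "dual_lattice L = {y. \<forall>x\<in>L. inner x y \<in> \<int>}"

definition voronoi :: "(real^'n) set \<Rightarrow> (real^'n) set" where
  "voronoi L = {z. \<forall>x\<in>L. inner (z - x) (z - x) \<ge> inner z z}"

text \<open>Vertex set V_P of the Voronoi region of D_n, as given in the context:
  the 2n vectors +-e_i and the 2^n vectors (+-1/2,...,+-1/2).\<close>
definition VP :: "(real^'n) set" where
  "VP = {v. \<exists>i. v = axis i 1 \<or> v = axis i (-1)}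
        \<union> {v. \<forall>i. v $ i = 1/2 \<or> v $ i = -1/2}"

definition Gverts :: "(real^'n) set" where
  "Gverts = (\<lambda>y. (1/2::real) *\<^sub>R y) ` dual_lattice Dn"

definition Ggens :: "(real^'n) set" where
  "Ggens = (\<lambda>v. (1/2::real) *\<^sub>R v) ` VP"

definition Gadj :: "real^'n \<Rightarrow> real^'n \<Rightarrow> bool" where
  "Gadj x y \<longleftrightarrow> x \<in> Gverts \<and> y \<in> Gverts \<and> x - y \<in> Ggens"

definition is_clique :: "(real^'n) set \<Rightarrow> bool" where
  "is_clique C \<longleftrightarrow> C \<subseteq> Gverts \<and> (\<forall>x\<in>C. \<forall>y\<in>C. x \<noteq> y \<longrightarrow> Gadj x y)"

definition closed_nbhd :: "(real^'n) set \<Rightarrow> (real^'n) set" where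
  "closed_nbhd C = {c + g | c g. c \<in> C \<and> g \<in> insert 0 Ggens}"

end

theory Submission
  imports Defs
begin

(* Fix c0 in the clique C. The generators are the half unit vectors (+-1/2) e_i, which lie in the
   lattice (1/2) Z^n, and the sign vectors (+-1/4, ..., +-1/4), which lie in its coset
   (1/4)(1,...,1) + (1/2) Z^n. Hence C splits into the part A in c0 + (1/2) Z^n and the part B in
   the coset; differences inside A or inside B are half unit vectors, so |A|, |B| <= 2 (three
   points cannot pairwise differ by half unit vectors), and differences between A and B are sign
   vectors.
   N[C] contains the disjoint sets (B + signs) u (A + half units) and (A + signs) u (B + half
   units), one in each coset. A single point has 2^n sign neighbours and a pair differing by a
   half unit vector at least 2^n + 2^(n-1). If |A| = 2, stepping from the points of A by a half
   unit away from B in each of the n - 1 coordinates on which B is constant gives 2(n - 1) half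
   unit neighbours at distance 3/4 from B in that coordinate, hence outside B + signs. Adding up,
   |N[C]| >= |C| (3 * 2^(n-2) + n - 1). *)

definition half_lattice :: "(real^'n) set" where
  "half_lattice = {v. \<forall>i. 2 * v $ i \<in> \<int>}"

definition quarter_coset :: "(real^'n) set" where
  "quarter_coset = {v. \<forall>i. 2 * v $ i + 1/2 \<in> \<int>}"

lemma half_lattice_add: "u \<in> half_lattice \<Longrightarrow> v \<in> half_lattice \<Longrightarrow> u + v \<in> half_lattice"
  unfolding half_lattice_def by (simp add: distrib_left Ints_add)

lemma half_lattice_uminus: "u \<in> half_lattice \<Longrightarrow> - u \<in> half_lattice"
  unfolding half_lattice_def by simp

lemma quarter_coset_uminus:
  assumes "q \<in> quarter_coset"
  shows "- q \<in> quarter_coset"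
proof -
  have "2 * (- q) $ i + 1/2 = 1 - (2 * q $ i + 1/2)" for i
    by simp
  moreover have "2 * q $ i + 1/2 \<in> \<int>" for i
    using assms by (simp add: quarter_coset_def)
  ultimately show ?thesis
    unfolding quarter_coset_def by (simp only: mem_Collect_eq Ints_diff Ints_1 simp_thms)
qed

lemma quarter_coset_add:
  assumes "q \<in> quarter_coset" and "q' \<in> quarter_coset"
  shows "q + q' \<in> half_lattice"
proof -
  have "2 * (q + q') $ i = (2 * q $ i + 1/2) + (2 * q' $ i + 1/2) - 1" for i
    by (simp add: algebra_simps)
  moreover have "2 * q $ i + 1/2 \<in> \<int>" "2 * q' $ i + 1/2 \<in> \<int>" for i
    using assms by (simp_all add: quarter_coset_def)
  ultimately show ?thesis
    unfolding half_lattice_def by (simp only: mem_Collect_eq Ints_diff Ints_add Ints_1 simp_thms)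
qed

lemma half_lattice_add_quarter_coset:
  assumes "u \<in> half_lattice" and "q \<in> quarter_coset"
  shows "u + q \<in> quarter_coset"
proof -
  have "2 * (u + q) $ i + 1/2 = 2 * u $ i + (2 * q $ i + 1/2)" for i
    by (simp add: algebra_simps)
  moreover have "2 * u $ i \<in> \<int>" "2 * q $ i + 1/2 \<in> \<int>" for i
    using assms by (simp_all add: half_lattice_def quarter_coset_def)
  ultimately show ?thesis
    unfolding quarter_coset_def by (simp only: mem_Collect_eq Ints_add simp_thms)
qed

lemma zero_in_half_lattice: "0 \<in> half_lattice"
  by (simp add: half_lattice_def)

lemma half_lattice_Int_quarter_coset: "half_lattice \<inter> quarter_coset = {}"
proof -
  have "(1/2 :: real) \<notin> \<int>"
    using fraction_not_in_Ints[of 2 1] by simp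
  then have "2 * r \<notin> \<int> \<or> 2 * r + 1/2 \<notin> \<int>" for r :: real
    using diff_in_Ints_iff_left[of "2 * r" "2 * r + 1/2"] by auto
  then show ?thesis
    unfolding half_lattice_def quarter_coset_def by blast
qed

definition half_units :: "(real^'n) set" where
  "half_units = {axis i a | i a. a \<in> {1/2, -1/2}}"

definition quarter_signs :: "(real^'n) set" where
  "quarter_signs = {h. \<forall>i. h $ i \<in> {1/4, -1/4}}"

lemma quarter_signs_nth: "h \<in> quarter_signs \<Longrightarrow> h $ i = 1/4 \<or> h $ i = -1/4"
  unfolding quarter_signs_def by blast

lemma half_units_subset_half_lattice: "half_units \<subseteq> half_lattice"
proof
  fix v :: "real^'n"
  assume "v \<in> half_units"
  then obtain i a where v: "v = axis i a" and a: "a \<in> {1/2, -1/2}"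
    unfolding half_units_def by blast
  have "2 * v $ j \<in> \<int>" for j
  proof -
    have "2 * v $ j \<in> {0, 1, -1}"
      using a by (auto simp: v axis_def)
    then show ?thesis
      by auto
  qed
  then show "v \<in> half_lattice"
    unfolding half_lattice_def by blast
qed

lemma quarter_signs_subset_quarter_coset: "quarter_signs \<subseteq> quarter_coset"
proof
  fix h :: "real^'n"
  assume h: "h \<in> quarter_signs"
  have "2 * h $ i + 1/2 \<in> \<int>" for i
  proof -
    have "h $ i \<in> {1/4, -1/4}"
      using h unfolding quarter_signs_def by blast
    then have "2 * h $ i + 1/2 \<in> {1, 0}"
      by auto
    then show ?thesis
      by auto
  qed
  then show "h \<in> quarter_coset"
    unfolding quarter_coset_def by blast
qed

lemma generator_classes:
  assumes "v \<in> half_units \<union> quarter_signs"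
  shows "v \<in> half_units \<longleftrightarrow> v \<in> half_lattice" and "v \<in> quarter_signs \<longleftrightarrow> v \<in> quarter_coset"
proof -
  have "v \<notin> half_lattice \<or> v \<notin> quarter_coset"
    using half_lattice_Int_quarter_coset by blast
  moreover have "v \<in> half_units \<Longrightarrow> v \<in> half_lattice"
    using half_units_subset_half_lattice by blast
  moreover have "v \<in> quarter_signs \<Longrightarrow> v \<in> quarter_coset"
    using quarter_signs_subset_quarter_coset by blast
  ultimately show "v \<in> half_units \<longleftrightarrow> v \<in> half_lattice" and "v \<in> quarter_signs \<longleftrightarrow> v \<in> quarter_coset"
    using assms by blast+
qed

lemma scaleR_axis: "(c::real) *\<^sub>R axis i a = axis i (c * a)"
  by (simp add: vec_eq_iff axis_def)

lemma Ggens_eq: "Ggens = half_units \<union> quarter_signs"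
proof -
  have "(1/2::real) *\<^sub>R v \<in> half_units \<union> quarter_signs" if v: "v \<in> VP" for v :: "real^'n"
  proof (cases "\<forall>i. v $ i = 1/2 \<or> v $ i = -1/2")
    case True
    have "((1/2::real) *\<^sub>R v) $ i \<in> {1/4, -1/4}" for i
      using True[rule_format, of i] by auto
    then show ?thesis
      unfolding quarter_signs_def by blast
  next
    case False
    then obtain i a where "v = axis i a" "a \<in> {1, -1}"
      using v unfolding VP_def by blast
    then have "(1/2::real) *\<^sub>R v = axis i (a/2)" and "a/2 \<in> {1/2, -1/2}"
      by (auto simp: scaleR_axis)
    then show ?thesis
      unfolding half_units_def by blast
  qed
  moreover have "2 *\<^sub>R w \<in> VP" if w: "w \<in> half_units \<union> quarter_signs" for w :: "real^'n"
  proof (cases "w \<in> half_units")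
    case True
    then obtain i a where "w = axis i a" and "a \<in> {1/2, -1/2}"
      unfolding half_units_def by blast
    then have "2 *\<^sub>R w = axis i (2 * a)" and "2 * a \<in> {1, -1}"
      by (auto simp: scaleR_axis)
    then show ?thesis
      unfolding VP_def by auto
  next
    case False
    have "(2 *\<^sub>R w) $ i = 1/2 \<or> (2 *\<^sub>R w) $ i = -1/2" for i
    proof -
      have "w $ i \<in> {1/4, -1/4}"
        using w False unfolding quarter_signs_def by blast
      then show ?thesis
        by auto
    qed
    then show ?thesis
      unfolding VP_def by blast
  qed
  then have "w \<in> (\<lambda>v. (1/2::real) *\<^sub>R v) ` VP" if "w \<in> half_units \<union> quarter_signs" for w :: "real^'n"
    using that by (intro image_eqI[of w _ "2 *\<^sub>R w"]) simp_all
  ultimately show ?thesis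
    unfolding Ggens_def by blast
qed

lemma card_vec_coordinates: "card {v :: 'a^'n. \<forall>i. v $ i \<in> B i} = (\<Prod>i\<in>UNIV. card (B i))"
proof -
  have "bij_betw vec_nth {v :: 'a^'n. \<forall>i. v $ i \<in> B i} (Pi\<^sub>E UNIV B)"
  proof (rule bij_betw_byWitness[where f' = vec_lambda])
    show "vec_nth ` {v :: 'a^'n. \<forall>i. v $ i \<in> B i} \<subseteq> Pi\<^sub>E UNIV B"
      by (auto simp: PiE_iff)
    show "vec_lambda ` Pi\<^sub>E UNIV B \<subseteq> {v :: 'a^'n. \<forall>i. v $ i \<in> B i}"
      by (auto simp: PiE_iff)
  qed (simp_all add: vec_lambda_inverse)
  then show ?thesis
    by (simp add: bij_betw_same_card card_PiE)
qed

lemma card_quarter_signs: "card (quarter_signs :: (real^'n) set) = 2 ^ CARD('n)"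
  unfolding quarter_signs_def card_vec_coordinates by (simp add: numeral_2_eq_2)

lemma finite_quarter_signs: "finite quarter_signs"
  by (rule card_ge_0_finite) (simp add: card_quarter_signs)

lemma card_quarter_signs_coordinate_eq:
  assumes "t \<in> {1/4, -1/4}"
  shows "card {h \<in> (quarter_signs :: (real^'n) set). h $ l = t} = 2 ^ (CARD('n) - 1)"
proof -
  define B where "B i = (if i = l then {t} else {1/4, -1/4 :: real})" for i
  have "{h \<in> quarter_signs. h $ l = t} = {v :: real^'n. \<forall>i. v $ i \<in> B i}"
    using assms by (auto simp: quarter_signs_def B_def)
  then have "card {h \<in> quarter_signs. h $ l = t} = (\<Prod>i\<in>UNIV. card (B i))"
    by (simp add: card_vec_coordinates)
  also have "\<dots> = (\<Prod>i\<in>UNIV - {l}. card (B i))"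
    by (simp add: prod.remove[of UNIV l] B_def)
  also have "\<dots> = (\<Prod>i\<in>UNIV - {l}. 2)"
    by (rule prod.cong) (simp_all add: B_def)
  also have "\<dots> = 2 ^ (CARD('n) - 1)"
    by (simp add: card_Diff_singleton)
  finally show ?thesis .
qed

lemma finite_half_units: "finite half_units"
proof (rule finite_subset)
  show "half_units \<subseteq> (\<lambda>(i, a). axis i a) ` (UNIV \<times> {1/2, -1/2})"
    unfolding half_units_def by force
qed simp

lemma uminus_quarter_signs: "h \<in> quarter_signs \<Longrightarrow> - h \<in> quarter_signs"
  by (auto simp: quarter_signs_def)

lemma half_units_no_triangle:
  assumes "x - y \<in> half_units" and "y - z \<in> half_units" and "x - z \<in> half_units"
  shows False
proof -
  obtain i a j b k c where "x - y = axis i a" "y - z = axis j b" "x - z = axis k c"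
    and abc: "a \<in> {1/2, -1/2}" "b \<in> {1/2, -1/2}" "c \<in> {1/2, -1/2}"
    using assms unfolding half_units_def by blast
  moreover have "x - z = (x - y) + (y - z)"
    by simp
  ultimately have sum: "axis k c = axis i a + axis j b"
    by simp
  show False
  proof (cases "i = j")
    case True
    then have "axis k c = axis i (a + b)"
      using sum by (simp add: vec_eq_iff axis_def)
    then have "c = a + b"
      using abc(3) by (auto simp: axis_eq_axis)
    then show False
      using abc by auto
  next
    case False
    have "axis k c $ i = a" and "axis k c $ j = b"
      using sum False by (simp_all add: axis_def)
    then have "k = i" and "k = j"
      using abc by (auto simp: axis_def split: if_splits)
    then show False
      using False by simp
  qed
qed

lemma pairwise_half_units_card_le_2:
  assumes "pairwise (\<lambda>x y. x - y \<in> half_units) S"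
  shows "card S \<le> 2"
proof (rule ccontr)
  assume "\<not> card S \<le> 2"
  then obtain T where "T \<subseteq> S" and "card T = 3"
    by (metis not_less_eq_eq numeral_2_eq_2 numeral_3_eq_3 obtain_subset_with_card_n)
  then obtain x y z where xyz: "x \<in> S" "y \<in> S" "z \<in> S" and "x \<noteq> y" "y \<noteq> z" "x \<noteq> z"
    by (auto simp: card_3_iff)
  show False
  proof (rule half_units_no_triangle)
    show "x - y \<in> half_units"
      using pairwiseD(1)[OF assms xyz(1,2) \<open>x \<noteq> y\<close>] .
    show "y - z \<in> half_units"
      using pairwiseD(1)[OF assms xyz(2,3) \<open>y \<noteq> z\<close>] .
    show "x - z \<in> half_units"
      using pairwiseD(1)[OF assms xyz(1,3) \<open>x \<noteq> z\<close>] .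
  qed
qed

lemma pairwise_half_units_common_coordinates:
  assumes "pairwise (\<lambda>x y. x - y \<in> half_units) T" and "d \<in> T"
  obtains J where "CARD('n) - 1 \<le> card J" and "\<forall>d'\<in>T. \<forall>j\<in>J. d' $ j = (d :: real^'n) $ j"
proof (cases "T \<subseteq> {d}")
  case True
  then show ?thesis
    using that[of UNIV] by auto
next
  case False
  then obtain d2 where d2: "d2 \<in> T" "d2 \<noteq> d"
    by blast
  then obtain l b where l: "d2 - d = axis l b"
    using pairwiseD(1)[OF assms(1) d2(1) assms(2) d2(2)] unfolding half_units_def by blast
  have "d' = d \<or> d' = d2" if "d' \<in> T" for d'
  proof (rule ccontr)
    assume "\<not> (d' = d \<or> d' = d2)"
    then show False
      using half_units_no_triangle[of d' d2 d] pairwiseD(1)[OF assms(1)] assms(2) that d2 by blast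
  qed
  moreover have "d2 $ j = d $ j" if "j \<noteq> l" for j
    using arg_cong[OF l, of "\<lambda>v. v $ j"] that by (simp add: axis_def)
  ultimately have "\<forall>d'\<in>T. \<forall>j\<in>UNIV - {l}. d' $ j = d $ j"
    by auto
  then show ?thesis
    using that[of "UNIV - {l}"] by (simp add: card_Diff_singleton)
qed

lemma card_singleton_plus: "card ({a} + A) = card (A :: 'a::ab_group_add set)"
  using card_plus_sing[of A a] by (simp add: add.commute)

lemma card_singleton_plus_quarter_signs: "card ({d :: real^'n} + quarter_signs) = 2 ^ CARD('n)"
  by (simp add: card_singleton_plus card_quarter_signs)

lemma card_pair_plus_quarter_signs:
  assumes "d2 - d \<in> half_units"
  shows "2 ^ CARD('n) + 2 ^ (CARD('n) - 1) \<le> card ({d, d2 :: real^'n} + quarter_signs)"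
proof -
  obtain l a where l: "d2 - d = axis l a" and a: "a \<in> {1/2, -1/2}"
    using assms unfolding half_units_def by blast
  define T where "T = {h \<in> quarter_signs. h $ l = a/2}"
  have card_T: "card T = 2 ^ (CARD('n) - 1)"
    unfolding T_def using a by (intro card_quarter_signs_coordinate_eq) auto
  have "T \<subseteq> quarter_signs"
    unfolding T_def by blast
  then have finite_T: "finite T"
    using finite_quarter_signs by (rule finite_subset)
  \<comment> \<open>At coordinate l the points of d2 + T lie 3/4 away from d, out of reach of d + quarter_signs.\<close>
  have disjoint: "({d} + quarter_signs) \<inter> ({d2} + T) = {}"
  proof -
    have "d + h \<noteq> d2 + h'" if "h \<in> quarter_signs" "h' \<in> T" for h h'
    proof
      assume sum_eq: "d + h = d2 + h'"
      have "(d + h) $ l = (d2 + h') $ l"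
        by (simp only: sum_eq)
      then have "d $ l + h $ l = d2 $ l + h' $ l"
        by simp
      moreover have "d2 $ l = d $ l + a"
        using arg_cong[OF l, of "\<lambda>v. v $ l"] by simp
      moreover have "h' $ l = a/2"
        using that(2) unfolding T_def by blast
      moreover have "h $ l \<in> {1/4, -1/4}"
        using that(1) unfolding quarter_signs_def by blast
      ultimately show False
        using a by auto
    qed
    then show ?thesis
      by (auto elim!: set_plus_elim)
  qed
  have "card (({d} + quarter_signs) \<union> ({d2} + T)) = card ({d} + quarter_signs) + card ({d2} + T)"
    using finite_quarter_signs finite_T by (intro card_Un_disjoint[OF _ _ disjoint] finite_set_plus) auto
  also have "\<dots> = 2 ^ CARD('n) + 2 ^ (CARD('n) - 1)"
    by (simp only: card_singleton_plus card_quarter_signs card_T)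
  finally have "card (({d} + quarter_signs) \<union> ({d2} + T)) = 2 ^ CARD('n) + 2 ^ (CARD('n) - 1)" .
  moreover have "card (({d} + quarter_signs) \<union> ({d2} + T)) \<le> card ({d, d2} + quarter_signs)"
  proof (rule card_mono)
    show "finite ({d, d2} + quarter_signs)"
      by (simp add: finite_quarter_signs finite_set_plus)
    show "({d} + quarter_signs) \<union> ({d2} + T) \<subseteq> {d, d2} + quarter_signs"
      using \<open>T \<subseteq> quarter_signs\<close> by (intro Un_least set_plus_mono2) auto
  qed
  ultimately show ?thesis
    by simp
qed

lemma exists_common_quarter_sign_neighbour:
  assumes "c' - c \<in> half_units"
  obtains d :: "real^'n" where "c - d \<in> quarter_signs" and "c' - d \<in> quarter_signs"
proof -
  obtain i a where i: "c' - c = axis i a" and a: "a \<in> {1/2, -1/2}"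
    using assms unfolding half_units_def by blast
  define \<sigma> :: "real^'n" where "\<sigma> = (\<chi> j. if j = i then - a/2 else 1/4)"
  have \<sigma>: "\<sigma> $ j \<in> {1/4, -1/4}" and shifted: "(axis i a + \<sigma>) $ j \<in> {1/4, -1/4}" for j
    using a by (auto simp: \<sigma>_def axis_def)
  have shift_eq: "c' - (c - \<sigma>) = axis i a + \<sigma>"
    using i by (simp add: algebra_simps)
  have "c' - (c - \<sigma>) \<in> quarter_signs"
    unfolding shift_eq quarter_signs_def using shifted by simp
  moreover have "c - (c - \<sigma>) \<in> quarter_signs"
    unfolding quarter_signs_def using \<sigma> by simp
  ultimately show ?thesis
    using that by blast
qed

text \<open>The point c + axis j (2 (c - d)_j) is the half unit step from c along coordinate j away
  from d; it lands at distance 3/4 from d in that coordinate.\<close>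
lemma half_step_away_notin_quarter_signs:
  assumes "c - d \<in> quarter_signs" and "d' $ j = d $ j"
  shows "c + axis j (2 * (c - d) $ j) - d' \<notin> quarter_signs"
proof
  assume "c + axis j (2 * (c - d) $ j) - d' \<in> quarter_signs"
  moreover have "(c + axis j (2 * (c - d) $ j) - d') $ j = 3 * (c - d) $ j"
    using assms(2) by simp
  ultimately have "3 * (c - d) $ j = 1/4 \<or> 3 * (c - d) $ j = -1/4"
    using quarter_signs_nth by metis
  then show False
    using quarter_signs_nth[OF assms(1), of j] by auto
qed

lemma half_step_in_half_units:
  assumes "h \<in> quarter_signs"
  shows "axis j (2 * h $ j) \<in> half_units"
proof -
  have "2 * h $ j \<in> {1/2, -1/2}"
    using quarter_signs_nth[OF assms, of j] by auto
  then show ?thesis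
    unfolding half_units_def by blast
qed

lemma exists_half_unit_points_avoiding:
  assumes "c' - c \<in> half_units" and "c - d \<in> quarter_signs" and "c' - d \<in> quarter_signs"
    and common: "\<forall>d'\<in>D. \<forall>j\<in>J. d' $ j = d $ j"
  obtains E where "E \<subseteq> {c, c'} + half_units" and "E \<inter> (D + quarter_signs) = {}"
    and "card E = 2 * card J"
proof -
  obtain i a where i: "c' - c = axis i a" and a: "a \<in> {1/2, -1/2}"
    using assms(1) unfolding half_units_def by blast
  have c': "c' = c + axis i a"
    using i by (metis add.commute diff_add_cancel)
  then have "(c' - d) $ i = (c - d) $ i + a"
    by simp
  then have sign_c: "(c - d) $ i = - a/2" and sign_c': "(c' - d) $ i = a/2"
    using quarter_signs_nth[OF assms(2), of i] quarter_signs_nth[OF assms(3), of i] a by auto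
  define f where "f x j = x + axis j (2 * (x - d) $ j)" for x j
  define E where "E = f c ` J \<union> f c' ` J"
  have inj: "inj_on (f x) J" if "x - d \<in> quarter_signs" for x
  proof (rule inj_onI)
    fix j k
    assume "f x j = f x k"
    moreover have "(x - d) $ m \<noteq> 0" for m
      using quarter_signs_nth[OF that, of m] by auto
    ultimately show "j = k"
      by (auto simp: f_def axis_eq_axis)
  qed
  have "f c j \<noteq> f c' k" for j k
  proof
    assume "f c j = f c' k"
    then have "(f c j - c) $ i = (f c' k - c) $ i"
      by simp
    moreover have "(f c j - c) $ i = (if j = i then - a else 0)"
      using sign_c by (simp add: f_def axis_def)
    moreover have "(f c' k - c) $ i = a + (if k = i then a else 0)"
      using sign_c' by (simp add: f_def c' axis_def)
    ultimately show False
      using a by (auto split: if_splits)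
  qed
  then have "f c ` J \<inter> f c' ` J = {}"
    by blast
  then have "card E = 2 * card J"
    unfolding E_def using inj assms(2,3) by (simp add: card_Un_disjoint card_image)
  moreover have "E \<subseteq> {c, c'} + half_units"
    unfolding E_def f_def using half_step_in_half_units assms(2,3) by blast
  moreover have "E \<inter> (D + quarter_signs) = {}"
  proof -
    have "p - d' \<notin> quarter_signs" if "p \<in> E" "d' \<in> D" for p d'
      using that common half_step_away_notin_quarter_signs assms(2,3)
      unfolding E_def f_def by blast
    then have "d' + h \<notin> E" if "d' \<in> D" "h \<in> quarter_signs" for d' h
      using that by fastforce
    then show ?thesis
      by (auto elim!: set_plus_elim)
  qed
  ultimately show ?thesis
    using that by blast
qed

lemma card_plus_quarter_signs_union_half_units:
  fixes S T :: "(real^'n) set"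
  assumes "finite S" and "finite T"
    and S: "pairwise (\<lambda>x y. x - y \<in> half_units) S"
    and T: "pairwise (\<lambda>x y. x - y \<in> half_units) T"
    and ST: "\<forall>a\<in>S. \<forall>b\<in>T. a - b \<in> quarter_signs"
  shows "card (T + quarter_signs) + (if card S = 2 then 2 * (CARD('n) - 1) else 0)
    \<le> card ((T + quarter_signs) \<union> (S + half_units))"
proof -
  have finite: "finite ((T + quarter_signs) \<union> (S + half_units))"
    using assms(1,2) by (simp add: finite_set_plus finite_quarter_signs finite_half_units)
  show ?thesis
  proof (cases "card S = 2")
    case False
    then show ?thesis
      using finite by (simp add: card_mono)
  next
    case True
    then obtain c c' where S_eq: "S = {c, c'}" and "c \<noteq> c'"
      by (meson card_2_iff)
    then have c'c: "c' - c \<in> half_units"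
      using pairwiseD(1)[OF S] by simp
    obtain d J where d: "c - d \<in> quarter_signs" "c' - d \<in> quarter_signs"
      and J: "CARD('n) - 1 \<le> card J" "\<forall>d'\<in>T. \<forall>j\<in>J. d' $ j = d $ j"
    proof (cases "T = {}")
      case True
      obtain d where "c - d \<in> quarter_signs" "c' - d \<in> quarter_signs"
        using exists_common_quarter_sign_neighbour[OF c'c] .
      then show ?thesis
        using that[of d UNIV] True by simp
    next
      case False
      then obtain d where "d \<in> T"
        by blast
      moreover obtain J where "CARD('n) - 1 \<le> card J" "\<forall>d'\<in>T. \<forall>j\<in>J. d' $ j = d $ j"
        using pairwise_half_units_common_coordinates[OF T \<open>d \<in> T\<close>] .
      ultimately show ?thesis
        using that ST S_eq by blast
    qed
    obtain E where E: "E \<subseteq> {c, c'} + half_units" "E \<inter> (T + quarter_signs) = {}"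
      and card_E: "card E = 2 * card J"
      using exists_half_unit_points_avoiding[OF c'c d J(2)] .
    have "finite E"
      using E(1) by (rule finite_subset) (simp add: finite_set_plus finite_half_units)
    then have "card (T + quarter_signs) + card E = card ((T + quarter_signs) \<union> E)"
      using E(2) assms(2) finite_quarter_signs
      by (intro card_Un_disjoint[symmetric] finite_set_plus) (auto simp: Int_commute)
    also have "\<dots> \<le> card ((T + quarter_signs) \<union> (S + half_units))"
      using finite E(1) S_eq by (intro card_mono) auto
    finally show ?thesis
      using True card_E J(1) by simp
  qed
qed

lemma card_mult_le_card_plus_quarter_signs:
  assumes T: "pairwise (\<lambda>x y. x - y \<in> half_units) T" and n: "2 \<le> CARD('n)"
  shows "card T * (3 * 2 ^ (CARD('n) - 2) + CARD('n) - 1)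
    \<le> card (T + (quarter_signs :: (real^'n) set)) + (if card T = 2 then 2 * (CARD('n) - 1) else 0)"
proof -
  define k where "k = CARD('n) - 2"
  have k: "CARD('n) = k + 2"
    using n by (simp add: k_def)
  have powers: "(2::nat) ^ (CARD('n) - 2) = 2 ^ k" "(2::nat) ^ CARD('n) = 4 * 2 ^ k"
    "(2::nat) ^ (CARD('n) - 1) = 2 * 2 ^ k"
    by (simp_all add: k power_add)
  have "Suc k \<le> 2 ^ k"
    using less_exp[of k] by (simp only: Suc_le_eq)
  consider "card T = 0" | "card T = 1" | "card T = 2"
    using pairwise_half_units_card_le_2[OF T] by linarith
  then show ?thesis
  proof cases
    case 1
    then show ?thesis
      by simp
  next
    case 2
    then obtain d where "T = {d}"
      by (rule card_1_singletonE)
    then show ?thesis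
      using \<open>Suc k \<le> 2 ^ k\<close> 2 by (simp add: card_singleton_plus_quarter_signs powers k)
  next
    case 3
    then obtain d d2 where T_eq: "T = {d, d2}" and "d \<noteq> d2"
      by (meson card_2_iff)
    then have "d2 - d \<in> half_units"
      using pairwiseD(1)[OF T, of d2 d] by simp
    then have "2 ^ CARD('n) + 2 ^ (CARD('n) - 1) \<le> card (T + quarter_signs)"
      unfolding T_eq by (rule card_pair_plus_quarter_signs)
    then show ?thesis
      using 3 by (simp add: powers k)
  qed
qed

lemma clique_diff_in_generators:
  assumes "is_clique C" and "x \<in> C" and "y \<in> C" and "x \<noteq> y"
  shows "x - y \<in> half_units \<union> quarter_signs"
  using assms unfolding is_clique_def Gadj_def Ggens_eq by blast

lemma closed_nbhd_eq_set_plus: "closed_nbhd C = C + insert 0 Ggens"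
  unfolding closed_nbhd_def set_plus_def by blast

lemma clique_split:
  fixes C :: "(real^'n) set"
  assumes C: "is_clique C" and "c0 \<in> C"
  defines "A \<equiv> {c \<in> C. c - c0 \<in> half_lattice}" and "B \<equiv> {c \<in> C. c - c0 \<in> quarter_coset}"
  shows "C = A \<union> B" and "A \<inter> B = {}"
    and "pairwise (\<lambda>x y. x - y \<in> half_units) A" and "pairwise (\<lambda>x y. x - y \<in> half_units) B"
    and "\<forall>a\<in>A. \<forall>b\<in>B. a - b \<in> quarter_signs" and "\<forall>b\<in>B. \<forall>a\<in>A. b - a \<in> quarter_signs"
proof -
  note gens = generator_classes[OF clique_diff_in_generators[OF C]]
  have diff: "x - y = (x - c0) + - (y - c0)" for x y :: "real^'n"
    by simp
  have "c - c0 \<in> half_lattice \<union> quarter_coset" if "c \<in> C" for c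
  proof (cases "c = c0")
    case True
    then show ?thesis
      by (simp add: zero_in_half_lattice)
  next
    case False
    then show ?thesis
      using gens[OF that \<open>c0 \<in> C\<close>] clique_diff_in_generators[OF C that \<open>c0 \<in> C\<close>] by blast
  qed
  then show "C = A \<union> B"
    unfolding A_def B_def by blast
  show "A \<inter> B = {}"
    using half_lattice_Int_quarter_coset unfolding A_def B_def by blast
  show "pairwise (\<lambda>x y. x - y \<in> half_units) A"
  proof (rule pairwiseI)
    fix x y
    assume "x \<in> A" "y \<in> A" "x \<noteq> y"
    moreover have "x - y \<in> half_lattice"
      using \<open>x \<in> A\<close> \<open>y \<in> A\<close>
      by (subst diff) (intro half_lattice_add half_lattice_uminus; simp add: A_def)
    ultimately show "x - y \<in> half_units"
      using gens(1)[of x y] by (simp add: A_def)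
  qed
  show "pairwise (\<lambda>x y. x - y \<in> half_units) B"
  proof (rule pairwiseI)
    fix x y
    assume "x \<in> B" "y \<in> B" "x \<noteq> y"
    moreover have "x - y \<in> half_lattice"
      using \<open>x \<in> B\<close> \<open>y \<in> B\<close>
      by (subst diff) (intro quarter_coset_add quarter_coset_uminus; simp add: B_def)
    ultimately show "x - y \<in> half_units"
      using gens(1)[of x y] by (simp add: B_def)
  qed
  have "a - b \<in> quarter_signs" if "a \<in> A" "b \<in> B" for a b
  proof -
    have "a - b \<in> quarter_coset"
      using that
      by (subst diff) (intro half_lattice_add_quarter_coset quarter_coset_uminus; simp add: A_def B_def)
    moreover have "a \<noteq> b"
      using that \<open>A \<inter> B = {}\<close> by blast
    ultimately show ?thesis
      using gens(2)[of a b] that by (simp add: A_def B_def)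
  qed
  moreover have "b - a = - (a - b)" for a b :: "real^'n"
    by simp
  ultimately show "\<forall>a\<in>A. \<forall>b\<in>B. a - b \<in> quarter_signs" and "\<forall>b\<in>B. \<forall>a\<in>A. b - a \<in> quarter_signs"
    using uminus_quarter_signs by metis+
qed

\<comment> \<open>Relative to base, the first set lies in the half lattice and the second in its quarter coset.\<close>
lemma plus_generators_disjoint:
  assumes A: "\<forall>a\<in>A. a - base \<in> half_lattice" and B: "\<forall>b\<in>B. b - base \<in> quarter_coset"
  shows "((B + quarter_signs) \<union> (A + half_units)) \<inter> ((A + quarter_signs) \<union> (B + half_units)) = {}"
proof -
  have "p - base \<in> half_lattice" if "p \<in> (B + quarter_signs) \<union> (A + half_units)" for p
    using that
  proof (elim UnE set_plus_elim)
    fix b h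
    assume "p = b + h" "b \<in> B" "h \<in> quarter_signs"
    then have "(b - base) + h \<in> half_lattice"
      using B quarter_signs_subset_quarter_coset by (intro quarter_coset_add) auto
    then show ?thesis
      using \<open>p = b + h\<close> by (simp add: algebra_simps)
  next
    fix a u
    assume "p = a + u" "a \<in> A" "u \<in> half_units"
    then have "(a - base) + u \<in> half_lattice"
      using A half_units_subset_half_lattice by (intro half_lattice_add) auto
    then show ?thesis
      using \<open>p = a + u\<close> by (simp add: algebra_simps)
  qed
  moreover have "p - base \<in> quarter_coset" if "p \<in> (A + quarter_signs) \<union> (B + half_units)" for p
    using that
  proof (elim UnE set_plus_elim)
    fix a h
    assume "p = a + h" "a \<in> A" "h \<in> quarter_signs"
    then have "(a - base) + h \<in> quarter_coset"
      using A quarter_signs_subset_quarter_coset by (intro half_lattice_add_quarter_coset) auto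
    then show ?thesis
      using \<open>p = a + h\<close> by (simp add: algebra_simps)
  next
    fix b u
    assume "p = b + u" "b \<in> B" "u \<in> half_units"
    then have "u + (b - base) \<in> quarter_coset"
      using B half_units_subset_half_lattice by (intro half_lattice_add_quarter_coset) auto
    then show ?thesis
      using \<open>p = b + u\<close> by (simp add: algebra_simps)
  qed
  ultimately show ?thesis
    using half_lattice_Int_quarter_coset by blast
qed

lemma card_mult_le_card_closed_nbhd:
  fixes C :: "(real^'n) set"
  assumes n: "2 \<le> CARD('n)" and C: "is_clique C" and "finite C"
  shows "card C * (3 * 2 ^ (CARD('n) - 2) + CARD('n) - 1) \<le> card (closed_nbhd C)"
proof (cases "C = {}")
  case True
  then show ?thesis
    by simp
next
  case False
  then obtain c0 where "c0 \<in> C"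
    by blast
  define A where "A = {c \<in> C. c - c0 \<in> half_lattice}"
  define B where "B = {c \<in> C. c - c0 \<in> quarter_coset}"
  note split = clique_split[OF C \<open>c0 \<in> C\<close>, folded A_def B_def]
  define X where "X = (B + quarter_signs) \<union> (A + half_units)"
  define Y where "Y = (A + quarter_signs) \<union> (B + half_units)"
  have fin: "finite A" "finite B"
    using \<open>finite C\<close> split(1) by (metis finite_Un)+
  have "X \<inter> Y = {}"
    unfolding X_def Y_def by (rule plus_generators_disjoint[where base = c0]) (simp_all add: A_def B_def)
  have "X \<union> Y \<subseteq> closed_nbhd C"
    unfolding closed_nbhd_eq_set_plus X_def Y_def Ggens_eq using split(1)
    by (intro Un_least set_plus_mono2) auto
  have "card C * (3 * 2 ^ (CARD('n) - 2) + CARD('n) - 1)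
      = card A * (3 * 2 ^ (CARD('n) - 2) + CARD('n) - 1) + card B * (3 * 2 ^ (CARD('n) - 2) + CARD('n) - 1)"
    using split(1,2) fin by (simp add: card_Un_disjoint add_mult_distrib)
  also have "\<dots> \<le> (card (A + quarter_signs) + (if card A = 2 then 2 * (CARD('n) - 1) else 0))
      + (card (B + quarter_signs) + (if card B = 2 then 2 * (CARD('n) - 1) else 0))"
    using card_mult_le_card_plus_quarter_signs[OF split(3) n] card_mult_le_card_plus_quarter_signs[OF split(4) n]
    by (rule add_mono)
  also have "\<dots> \<le> card X + card Y"
    using card_plus_quarter_signs_union_half_units[OF fin(1) fin(2) split(3) split(4) split(5)]
      card_plus_quarter_signs_union_half_units[OF fin(2) fin(1) split(4) split(3) split(6)]
    unfolding X_def Y_def by linarith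
  also have "\<dots> = card (X \<union> Y)"
    using \<open>X \<inter> Y = {}\<close> fin
    by (simp add: card_Un_disjoint X_def Y_def finite_set_plus finite_quarter_signs finite_half_units)
  also have "\<dots> \<le> card (closed_nbhd C)"
    using \<open>X \<union> Y \<subseteq> closed_nbhd C\<close> \<open>finite C\<close>
    by (intro card_mono) (simp_all add: closed_nbhd_eq_set_plus finite_set_plus Ggens_eq
        finite_quarter_signs finite_half_units)
  finally show ?thesis .
qed

theorem lemma16:
  fixes C :: "(real^'n) set"
  assumes "CARD('n) \<ge> 4"
    and "is_clique C"
  shows "real (card C) / real (card (closed_nbhd C))
           \<le> 1 / ((3/4) * 2 ^ CARD('n) + real CARD('n) - 1)"
proof -
  define M :: nat where "M = 3 * 2 ^ (CARD('n) - 2) + CARD('n) - 1"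
  define k where "k = CARD('n) - 2"
  have k: "CARD('n) = k + 2"
    using assms(1) by (simp add: k_def)
  have M_real: "(3/4) * 2 ^ CARD('n) + real CARD('n) - 1 = real M"
    unfolding M_def k by (simp add: power_add)
  have "0 < M"
    unfolding M_def k by simp
  have "card C * M \<le> card (closed_nbhd C)"
  proof (cases "finite C")
    case True
    then show ?thesis
      using card_mult_le_card_closed_nbhd[OF _ assms(2)] assms(1) unfolding M_def by simp
  next
    case False
    then show ?thesis
      by simp
  qed
  then have "real (card C) * real M \<le> real (card (closed_nbhd C))"
    by (metis of_nat_le_iff of_nat_mult)
  then show ?thesis
    unfolding M_real using \<open>0 < M\<close> by (cases "card (closed_nbhd C) = 0") (simp_all add: field_simps)
qed

end
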